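(* Consider a single element $[x_0,x_p]$ with $p\ge1$, Gauss–Lobatto nodes and the matrices $\mathcal{P},\mathcal{Q}_x,\mathcal{D}_x,\mathcal{B}$ as in the context. Let $a\ge 0$ be a constant, let $\varepsilon_k(t)\ge 0$ ($k=0,\dots,p$) be continuous nodal diffusion coefficients with $\mathcal{E}(t)=\mathrm{diag}(\varepsilon_0(t),\dots,\varepsilon_p(t))$, and let $$\mathcal{Q}_{xx}(\varepsilon)=\mathcal{E}\mathcal{B}\mathcal{D}_x-(\sqrt{\mathcal{E}}\mathcal{D}_x)^T\mathcal{P}(\sqrt{\mathcal{E}}\mathcal{D}_x).$$ Let $\mathbf{U}(t)=(\bar u_0,\dots,\bar u_p)^T$ be a $C^1$ solution of the semi-discrete scheme $$\mathcal{P}\frac{d\mathbf{U}}{dt}+a\,\mathcal{Q}_x\mathbf{U}=\mathcal{Q}_{xx}(\varepsilon)\mathbf{U}+\sigma_0\,e_0\big[a\bar u_0-\varepsilon_0(\mathcal{D}_x\mathbf{U})_0-g_0\big]+\sigma_p\,e_p\big[-\varepsilon_p(\mathcal{D}_x\mathbf{U})_p-g_p\big],$$ where $e_0,e_p$ are the first and last standard unit vectors in $\mathbb{R}^{p+1}$. If $\sigma_0=-1$, $\sigma_p=1$ and the boundary data vanish ($g_0=g_p=0$), then for all $t\ge0$ $$\mathbf{U}(t)^T\mathcal{P}\mathbf{U}(t)+2\int_0^t\big(\sqrt{\mathcal{E}}\mathcal{D}_x\mathbf{U}\big)^T\mathcal{P}\big(\sqrt{\mathcal{E}}\mathcal{D}_x\mathbf{U}\big)\,ds\le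 \mathbf{U}(0)^T\mathcal{P}\mathbf{U}(0).$$
   Context: Gauss–Lobatto nodes $x_0<\dots<x_p$ (including both endpoints) with positive weights $w_0,\dots,w_p$; $\ell_j$ the degree-$p$ Lagrange basis polynomials on these nodes. $\mathcal{P}=\mathrm{diag}(w_0,\dots,w_p)$; $(\mathcal{Q}_x)_{ij}=\int_{x_0}^{x_p}\ell_i\ell_j'\,dx$; $\mathcal{D}_x=\mathcal{P}^{-1}\mathcal{Q}_x$, so $(\mathcal{D}_x\mathbf{U})_k$ is the derivative at $x_k$ of the interpolant $\sum_j\bar u_j\ell_j$; $\mathcal{B}=\mathrm{diag}(-1,0,\dots,0,1)$; $\sqrt{\mathcal{E}}=\mathrm{diag}(\sqrt{\varepsilon_0},\dots,\sqrt{\varepsilon_p})$. This is the discretization of $u_t+au_x=(\varepsilon u_x)_x$ with weakly imposed boundary conditions $au-\varepsilon u_x=g_0$ at the left end and $-\varepsilon u_x=g_p$ at the right end; $\sigma_0,\sigma_p$ are penalty parameters. *)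

theory Defs
  imports "HOL-Analysis.Analysis" "HOL-Computational_Algebra.Polynomial"
begin

text \<open>Vectors in R^(p+1) and (p+1)x(p+1) matrices are represented as functions on
  indices 0..p (values outside are irrelevant).\<close>

definition mat_vec :: "nat \<Rightarrow> (nat \<Rightarrow> nat \<Rightarrow> real) \<Rightarrow> (nat \<Rightarrow> real) \<Rightarrow> nat \<Rightarrow> real" where
  "mat_vec p A v = (\<lambda>i. \<Sum>j\<le>p. A i j * v j)"

definition mat_mul :: "nat \<Rightarrow> (nat \<Rightarrow> nat \<Rightarrow> real) \<Rightarrow> (nat \<Rightarrow> nat \<Rightarrow> real) \<Rightarrow> nat \<Rightarrow> nat \<Rightarrow> real" where
  "mat_mul p A B = (\<lambda>i k. \<Sum>j\<le>p. A i j * B j k)"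

definition mat_transp :: "(nat \<Rightarrow> nat \<Rightarrow> real) \<Rightarrow> nat \<Rightarrow> nat \<Rightarrow> real" where
  "mat_transp A = (\<lambda>i j. A j i)"

definition mat_diag :: "(nat \<Rightarrow> real) \<Rightarrow> nat \<Rightarrow> nat \<Rightarrow> real" where
  "mat_diag d = (\<lambda>i j. if i = j then d i else 0)"

definition mat_diff :: "(nat \<Rightarrow> nat \<Rightarrow> real) \<Rightarrow> (nat \<Rightarrow> nat \<Rightarrow> real) \<Rightarrow> nat \<Rightarrow> nat \<Rightarrow> real" where
  "mat_diff A B = (\<lambda>i j. A i j - B i j)"

definition dot :: "nat \<Rightarrow> (nat \<Rightarrow> real) \<Rightarrow> (nat \<Rightarrow> real) \<Rightarrow> real" where
  "dot p u v = (\<Sum>k\<le>p. u k * v k)"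

definition unit_vec :: "nat \<Rightarrow> nat \<Rightarrow> real" where
  "unit_vec i = (\<lambda>k. if k = i then 1 else 0)"

text \<open>Gauss--Lobatto rule on [x_0,x_p]: p+1 strictly increasing nodes (the endpoints
  x_0, x_p being nodes), positive weights, and exactness for all polynomials of degree
  at most 2p-1 (this characterizes the Gauss--Lobatto rule uniquely).\<close>
definition gauss_lobatto :: "nat \<Rightarrow> (nat \<Rightarrow> real) \<Rightarrow> (nat \<Rightarrow> real) \<Rightarrow> bool" where
  "gauss_lobatto p x w \<longleftrightarrow>
     (\<forall>i j. i < j \<and> j \<le> p \<longrightarrow> x i < x j) \<and>
     (\<forall>k\<le>p. 0 < w k) \<and>
     (\<forall>q :: real poly. degree q \<le> 2 * p - 1 \<longrightarrow>
        integral {x 0..x p} (poly q) = (\<Sum>k\<le>p. w k * poly q (x k)))"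

definition lagrange :: "nat \<Rightarrow> (nat \<Rightarrow> real) \<Rightarrow> nat \<Rightarrow> real \<Rightarrow> real" where
  "lagrange p x j = (\<lambda>y. \<Prod>m\<in>{..p} - {j}. (y - x m) / (x j - x m))"

definition Pmat :: "(nat \<Rightarrow> real) \<Rightarrow> nat \<Rightarrow> nat \<Rightarrow> real" where
  "Pmat w = mat_diag w"

definition Qx :: "nat \<Rightarrow> (nat \<Rightarrow> real) \<Rightarrow> nat \<Rightarrow> nat \<Rightarrow> real" where
  "Qx p x = (\<lambda>i j. integral {x 0..x p} (\<lambda>y. lagrange p x i y * deriv (lagrange p x j) y))"

definition Dx :: "nat \<Rightarrow> (nat \<Rightarrow> real) \<Rightarrow> (nat \<Rightarrow> real) \<Rightarrow> nat \<Rightarrow> nat \<Rightarrow> real" where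
  "Dx p x w = mat_mul p (mat_diag (\<lambda>k. 1 / w k)) (Qx p x)"

definition Bmat :: "nat \<Rightarrow> nat \<Rightarrow> nat \<Rightarrow> real" where
  "Bmat p = mat_diag (\<lambda>k. if k = 0 then -1 else if k = p then 1 else 0)"

definition Qxx :: "nat \<Rightarrow> (nat \<Rightarrow> real) \<Rightarrow> (nat \<Rightarrow> real) \<Rightarrow> (nat \<Rightarrow> real) \<Rightarrow> nat \<Rightarrow> nat \<Rightarrow> real" where
  "Qxx p x w eps =
     mat_diff (mat_mul p (mat_mul p (mat_diag eps) (Bmat p)) (Dx p x w))
       (mat_mul p (mat_mul p (mat_transp (mat_mul p (mat_diag (\<lambda>k. sqrt (eps k))) (Dx p x w))) (Pmat w))
          (mat_mul p (mat_diag (\<lambda>k. sqrt (eps k))) (Dx p x w)))"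

end

theory Submission
  imports Defs
begin

text \<open>Energy method. Integration by parts gives the summation-by-parts property
  \<open>Q\<^sub>x + Q\<^sub>x\<^sup>T = B\<close>, so \<open>U\<^sup>T Q\<^sub>x U = (u\<^sub>p\<^sup>2 - u\<^sub>0\<^sup>2)/2\<close>, while
  \<open>U\<^sup>T Q\<^sub>x\<^sub>x U\<close> is the boundary flux \<open>\<epsilon>\<^sub>p u\<^sub>p (D\<^sub>xU)\<^sub>p - \<epsilon>\<^sub>0 u\<^sub>0 (D\<^sub>xU)\<^sub>0\<close> minus the
  dissipation \<open>(\<surd>E D\<^sub>xU)\<^sup>T P (\<surd>E D\<^sub>xU)\<close>. With \<open>\<sigma>\<^sub>0 = -1\<close>, \<open>\<sigma>\<^sub>p = 1\<close> and zero data the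
  penalty terms cancel the diffusive boundary fluxes, leaving
  \<open>d/dt U\<^sup>T P U = -a (u\<^sub>0\<^sup>2 + u\<^sub>p\<^sup>2) - 2 (dissipation) \<le> -2 (dissipation)\<close>;
  integrating in time gives the estimate.\<close>

lemma mat_vec_mat_mul: "mat_vec p (mat_mul p A B) v = mat_vec p A (mat_vec p B v)"
proof (rule ext)
  fix i
  have "(\<Sum>j\<le>p. (\<Sum>l\<le>p. A i l * B l j) * v j) = (\<Sum>j\<le>p. \<Sum>l\<le>p. A i l * (B l j * v j))"
    by (simp add: sum_distrib_right mult.assoc)
  also have "\<dots> = (\<Sum>l\<le>p. \<Sum>j\<le>p. A i l * (B l j * v j))" by (rule sum.swap)
  also have "\<dots> = (\<Sum>l\<le>p. A i l * (\<Sum>j\<le>p. B l j * v j))" by (simp add: sum_distrib_left)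
  finally show "mat_vec p (mat_mul p A B) v i = mat_vec p A (mat_vec p B v) i"
    by (simp add: mat_vec_def mat_mul_def)
qed

lemma mat_vec_mat_diff: "mat_vec p (mat_diff A B) v = (\<lambda>i. mat_vec p A v i - mat_vec p B v i)"
  by (rule ext) (simp add: mat_vec_def mat_diff_def sum_subtractf left_diff_distrib)

lemma mat_vec_mat_diag:
  assumes "k \<le> p"
  shows "mat_vec p (mat_diag d) v k = d k * v k"
proof -
  have "mat_vec p (mat_diag d) v k = (\<Sum>j\<le>p. if k = j then d k * v j else 0)"
    unfolding mat_vec_def mat_diag_def by (rule sum.cong) auto
  then show ?thesis using assms by simp
qed

lemma dot_diff_right: "dot p u (\<lambda>i. f i - g i) = dot p u f - dot p u g"
  by (simp add: dot_def sum_subtractf right_diff_distrib)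

lemma dot_mat_vec_transp: "dot p u (mat_vec p (mat_transp A) v) = dot p (mat_vec p A u) v"
proof -
  have "dot p u (mat_vec p (mat_transp A) v) = (\<Sum>k\<le>p. \<Sum>j\<le>p. u k * A j k * v j)"
    by (simp add: dot_def mat_vec_def mat_transp_def sum_distrib_left mult.assoc)
  also have "\<dots> = (\<Sum>j\<le>p. \<Sum>k\<le>p. u k * A j k * v j)" by (rule sum.swap)
  also have "\<dots> = dot p (mat_vec p A u) v"
    unfolding dot_def mat_vec_def sum_distrib_right by (rule sum.cong) (simp_all add: mult_ac)
  finally show ?thesis .
qed

lemma dot_mat_vec_mat_diag: "dot p u (mat_vec p (mat_diag d) v) = (\<Sum>k\<le>p. d k * u k * v k)"
  unfolding dot_def by (rule sum.cong) (auto simp: mat_vec_mat_diag)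

lemma dot_mat_vec_symmetrize:
  "2 * dot p u (mat_vec p A u) = dot p u (mat_vec p (\<lambda>i j. A i j + A j i) u)"
proof -
  have swap: "(\<Sum>i\<le>p. \<Sum>j\<le>p. u i * A j i * u j) = (\<Sum>i\<le>p. \<Sum>j\<le>p. u i * A i j * u j)"
    by (subst sum.swap) (simp add: mult_ac)
  have "\<And>B. dot p u (mat_vec p B u) = (\<Sum>i\<le>p. \<Sum>j\<le>p. u i * B i j * u j)"
    by (simp add: dot_def mat_vec_def sum_distrib_left mult_ac)
  then show ?thesis
    by (simp add: distrib_left distrib_right sum.distrib swap)
qed

definition lagrange_basis_poly :: "nat \<Rightarrow> (nat \<Rightarrow> real) \<Rightarrow> nat \<Rightarrow> real poly" where
  "lagrange_basis_poly p x j = (\<Prod>m\<in>{..p} - {j}. [:- x m / (x j - x m), 1 / (x j - x m):])"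

lemma lagrange_eq_poly: "lagrange p x j = poly (lagrange_basis_poly p x j)"
  unfolding lagrange_def lagrange_basis_poly_def
  by (rule ext) (simp add: poly_prod add_divide_distrib diff_divide_distrib)

lemma deriv_lagrange: "deriv (lagrange p x j) = poly (pderiv (lagrange_basis_poly p x j))"
  unfolding lagrange_eq_poly by (rule ext) (rule DERIV_imp_deriv, simp)

lemma lagrange_at_node:
  assumes "inj_on x {..p}" "i \<le> p" "k \<le> p"
  shows "lagrange p x i (x k) = (if i = k then 1 else 0)"
proof (cases "i = k")
  case True
  have "x k \<noteq> x m" if "m \<le> p" "m \<noteq> k" for m
    using assms that by (auto dest: inj_onD)
  then show ?thesis using True unfolding lagrange_def by (auto intro!: prod.neutral)
next
  case False
  then have "k \<in> {..p} - {i}" "x i \<noteq> x k"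
    using assms by (auto dest: inj_onD)
  then show ?thesis using False unfolding lagrange_def by (auto intro!: prod_zero)
qed

text \<open>Only the integration by parts \<open>\<integral> (\<ell>\<^sub>i \<ell>\<^sub>j)' = [\<ell>\<^sub>i \<ell>\<^sub>j]\<close> and
  the Kronecker property at the end nodes are used, not the exactness of the quadrature.\<close>

lemma Qx_summation_by_parts:
  assumes x: "strict_mono_on {..p} x" and p: "1 \<le> p" and ij: "i \<le> p" "j \<le> p"
  shows "Qx p x i j + Qx p x j i = Bmat p i j"
proof -
  let ?li = "lagrange_basis_poly p x i" and ?lj = "lagrange_basis_poly p x j"
  have inj: "inj_on x {..p}" using x by (rule strict_mono_on_imp_inj_on)
  have le: "x 0 \<le> x p" using x p by (auto dest: strict_mono_onD)
  have "(poly (?li * ?lj) has_vector_derivative poly (pderiv (?li * ?lj)) y)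
      (at y within {x 0..x p})" for y
    unfolding has_real_derivative_iff_has_vector_derivative[symmetric]
    by (rule has_field_derivative_at_within) (rule poly_DERIV)
  then have "(poly (pderiv (?li * ?lj)) has_integral
      poly (?li * ?lj) (x p) - poly (?li * ?lj) (x 0)) {x 0..x p}"
    by (rule fundamental_theorem_of_calculus[OF le])
  moreover have "poly (pderiv (?li * ?lj))
      = (\<lambda>y. poly ?li y * poly (pderiv ?lj) y + poly ?lj y * poly (pderiv ?li) y)"
    by (rule ext) (simp add: pderiv_mult)
  ultimately have "integral {x 0..x p} (\<lambda>y. poly ?li y * poly (pderiv ?lj) y)
      + integral {x 0..x p} (\<lambda>y. poly ?lj y * poly (pderiv ?li) y)
      = poly (?li * ?lj) (x p) - poly (?li * ?lj) (x 0)"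
    by (subst integral_add[symmetric]; (intro integrable_continuous_interval continuous_intros)?)
       (simp add: integral_unique)
  then have "Qx p x i j + Qx p x j i
      = lagrange p x i (x p) * lagrange p x j (x p) - lagrange p x i (x 0) * lagrange p x j (x 0)"
    unfolding Qx_def deriv_lagrange by (simp add: lagrange_eq_poly)
  then show ?thesis
    using ij p by (auto simp: lagrange_at_node[OF inj] Bmat_def mat_diag_def)
qed

lemma dot_mat_vec_Bmat:
  assumes "1 \<le> p"
  shows "dot p u (mat_vec p (Bmat p) u) = u p * u p - u 0 * u 0"
proof -
  have "dot p u (mat_vec p (Bmat p) u)
      = (\<Sum>k\<le>p. (if k = p then u p * u p else 0) - (if k = 0 then u 0 * u 0 else 0))"
    unfolding Bmat_def dot_mat_vec_mat_diag using assms by (intro sum.cong) auto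
  then show ?thesis by (simp add: sum_subtractf)
qed

lemma dot_mat_vec_Qx:
  assumes "strict_mono_on {..p} x" "1 \<le> p"
  shows "2 * dot p u (mat_vec p (Qx p x) u) = u p * u p - u 0 * u 0"
proof -
  have "mat_vec p (\<lambda>i j. Qx p x i j + Qx p x j i) u i = mat_vec p (Bmat p) u i" if "i \<le> p" for i
    unfolding mat_vec_def using that by (intro sum.cong) (auto simp: Qx_summation_by_parts[OF assms])
  then have "dot p u (mat_vec p (\<lambda>i j. Qx p x i j + Qx p x j i) u) = dot p u (mat_vec p (Bmat p) u)"
    unfolding dot_def by (intro sum.cong) auto
  then show ?thesis
    by (simp add: dot_mat_vec_symmetrize dot_mat_vec_Bmat[OF assms(2)])
qed

definition dissipation :: "nat \<Rightarrow> (nat \<Rightarrow> real) \<Rightarrow> (nat \<Rightarrow> real) \<Rightarrow> (nat \<Rightarrow> real) \<Rightarrow> (nat \<Rightarrow> real) \<Rightarrow> real" where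
  "dissipation p x w e u =
     dot p (mat_vec p (mat_mul p (mat_diag (\<lambda>k. sqrt (e k))) (Dx p x w)) u)
       (mat_vec p (Pmat w) (mat_vec p (mat_mul p (mat_diag (\<lambda>k. sqrt (e k))) (Dx p x w)) u))"

lemma dissipation_eq_sum:
  "dissipation p x w e u = (\<Sum>k\<le>p. w k * (sqrt (e k) * mat_vec p (Dx p x w) u k)\<^sup>2)"
  unfolding dissipation_def Pmat_def dot_mat_vec_mat_diag mat_vec_mat_mul
  by (rule sum.cong) (auto simp: mat_vec_mat_diag power2_eq_square)

lemma dot_mat_vec_Qxx:
  assumes "1 \<le> p"
  shows "dot p u (mat_vec p (Qxx p x w e) u) =
     e p * u p * mat_vec p (Dx p x w) u p - e 0 * u 0 * mat_vec p (Dx p x w) u 0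
     - dissipation p x w e u"
proof -
  let ?S = "mat_mul p (mat_diag (\<lambda>k. sqrt (e k))) (Dx p x w)"
  let ?z = "mat_vec p (Dx p x w) u"
  have "dot p u (mat_vec p (mat_mul p (mat_mul p (mat_diag e) (Bmat p)) (Dx p x w)) u)
      = (\<Sum>k\<le>p. (if k = p then e p * u p * ?z p else 0) - (if k = 0 then e 0 * u 0 * ?z 0 else 0))"
    unfolding mat_vec_mat_mul dot_def Bmat_def
    using assms by (intro sum.cong) (auto simp: mat_vec_mat_diag)
  also have "\<dots> = e p * u p * ?z p - e 0 * u 0 * ?z 0"
    by (simp add: sum_subtractf)
  finally have boundary: "dot p u (mat_vec p (mat_mul p (mat_mul p (mat_diag e) (Bmat p)) (Dx p x w)) u)
      = e p * u p * ?z p - e 0 * u 0 * ?z 0" .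
  have "dot p u (mat_vec p (mat_mul p (mat_mul p (mat_transp ?S) (Pmat w)) ?S) u)
      = dissipation p x w e u"
    unfolding dissipation_def mat_vec_mat_mul[of p "mat_mul p _ _"]
      mat_vec_mat_mul[of p "mat_transp _"] dot_mat_vec_transp ..
  then show ?thesis
    unfolding Qxx_def mat_vec_mat_diff dot_diff_right boundary by simp
qed

text \<open>\<open>v\<close> stands for \<open>dU/dt\<close> at a fixed time.\<close>

lemma energy_rate:
  assumes x: "strict_mono_on {..p} x" and p: "1 \<le> p"
    and scheme: "\<forall>k\<le>p. mat_vec p (Pmat w) v k + a * mat_vec p (Qx p x) u k
       = mat_vec p (Qxx p x w e) u k
         - unit_vec 0 k * (a * u 0 - e 0 * mat_vec p (Dx p x w) u 0)
         + unit_vec p k * (- e p * mat_vec p (Dx p x w) u p)"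
  shows "2 * dot p u (mat_vec p (Pmat w) v)
    = - 2 * dissipation p x w e u - a * (u 0 * u 0 + u p * u p)"
proof -
  let ?z = "mat_vec p (Dx p x w) u"
  have "dot p u (mat_vec p (Pmat w) v)
      = (\<Sum>k\<le>p. u k * mat_vec p (Qxx p x w e) u k - a * (u k * mat_vec p (Qx p x) u k)
          - u k * unit_vec 0 k * (a * u 0 - e 0 * ?z 0) - u k * unit_vec p k * (e p * ?z p))"
    unfolding dot_def
  proof (rule sum.cong)
    fix k assume "k \<in> {..p}"
    then have "u k * (mat_vec p (Pmat w) v k + a * mat_vec p (Qx p x) u k)
      = u k * (mat_vec p (Qxx p x w e) u k - unit_vec 0 k * (a * u 0 - e 0 * ?z 0)
         + unit_vec p k * (- e p * ?z p))"
      using scheme by simp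
    then show "u k * mat_vec p (Pmat w) v k = u k * mat_vec p (Qxx p x w e) u k
        - a * (u k * mat_vec p (Qx p x) u k)
        - u k * unit_vec 0 k * (a * u 0 - e 0 * ?z 0) - u k * unit_vec p k * (e p * ?z p)"
      by (simp add: algebra_simps)
  qed simp
  also have "\<dots> = dot p u (mat_vec p (Qxx p x w e) u) - a * dot p u (mat_vec p (Qx p x) u)
        - (\<Sum>k\<le>p. u k * unit_vec 0 k) * (a * u 0 - e 0 * ?z 0)
        - (\<Sum>k\<le>p. u k * unit_vec p k) * (e p * ?z p)"
    by (simp add: dot_def sum_subtractf sum_distrib_left sum_distrib_right)
  also have "\<dots> = dot p u (mat_vec p (Qxx p x w e) u) - a * dot p u (mat_vec p (Qx p x) u)
        - u 0 * (a * u 0 - e 0 * ?z 0) - u p * (e p * ?z p)"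
  proof -
    have "(\<Sum>k\<le>p. u k * unit_vec i k) = u i" if "i \<le> p" for i
      using that by (simp add: unit_vec_def if_distrib cong: if_cong)
    then show ?thesis by simp
  qed
  moreover have "dot p u (mat_vec p (Qx p x) u) = (u p * u p - u 0 * u 0) / 2"
    using dot_mat_vec_Qx[OF x p, of u] by simp
  ultimately show ?thesis
    unfolding dot_mat_vec_Qxx[OF p] by (simp add: field_simps)
qed

lemma has_real_derivative_P_energy:
  assumes "\<And>k. k \<le> p \<Longrightarrow> ((\<lambda>s. U s k) has_real_derivative V k) (at s within S)"
  shows "((\<lambda>s. dot p (U s) (mat_vec p (Pmat w) (U s))) has_real_derivative
      2 * dot p (U s) (mat_vec p (Pmat w) V)) (at s within S)"
proof -
  have "((\<lambda>s. w k * U s k * U s k) has_real_derivative 2 * (w k * U s k * V k)) (at s within S)"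
    if "k \<le> p" for k
    using DERIV_mult[OF DERIV_cmult[OF assms[OF that]] assms[OF that], of "w k"]
    by (simp add: algebra_simps)
  then have "((\<lambda>s. \<Sum>k\<le>p. w k * U s k * U s k) has_real_derivative
      (\<Sum>k\<le>p. 2 * (w k * U s k * V k))) (at s within S)"
    by (intro DERIV_sum) auto
  then show ?thesis
    unfolding Pmat_def dot_mat_vec_mat_diag by (simp add: sum_distrib_left mult_ac)
qed

lemma continuous_on_dissipation:
  assumes "\<And>k. k \<le> p \<Longrightarrow> continuous_on S (\<lambda>s. U s k)"
    and "\<And>k. k \<le> p \<Longrightarrow> continuous_on S (e k)"
  shows "continuous_on S (\<lambda>s. dissipation p x w (\<lambda>k. e k s) (U s))"
  unfolding dissipation_eq_sum mat_vec_def
  by (intro continuous_intros) (auto intro: assms)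

lemma integral_bound_from_derivative_le:
  fixes E E' \<Phi> :: "real \<Rightarrow> real"
  assumes t: "0 \<le> t"
    and E: "\<And>s. s \<in> {0..t} \<Longrightarrow> (E has_real_derivative E' s) (at s within {0..t})"
    and rate: "\<And>s. s \<in> {0..t} \<Longrightarrow> E' s \<le> - 2 * \<Phi> s"
    and \<Phi>: "\<Phi> integrable_on {0..t}"
  shows "E t + 2 * integral {0..t} \<Phi> \<le> E 0"
proof -
  have "(E' has_integral E t - E 0) {0..t}"
    by (intro fundamental_theorem_of_calculus t)
      (simp add: E has_real_derivative_iff_has_vector_derivative[symmetric])
  moreover have "((\<lambda>s. - 2 * \<Phi> s) has_integral - 2 * integral {0..t} \<Phi>) {0..t}"
    using \<Phi> by (intro has_integral_mult_right integrable_integral)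
  ultimately have "E t - E 0 \<le> - 2 * integral {0..t} \<Phi>"
    using rate by (rule has_integral_le)
  then show ?thesis by simp
qed

theorem proposition2:
  fixes p :: nat and x w :: "nat \<Rightarrow> real" and a :: real
    and eps :: "nat \<Rightarrow> real \<Rightarrow> real"
    and U U' :: "real \<Rightarrow> nat \<Rightarrow> real"
    and \<sigma>0 \<sigma>p g0 gp :: real
  assumes p: "1 \<le> p"
    and GL: "gauss_lobatto p x w"
    and a: "0 \<le> a"
    and eps_nonneg: "\<And>k t. k \<le> p \<Longrightarrow> 0 \<le> t \<Longrightarrow> 0 \<le> eps k t"
    and eps_cont: "\<And>k. k \<le> p \<Longrightarrow> continuous_on {0..} (eps k)"
    and U_deriv: "\<And>k t. k \<le> p \<Longrightarrow> 0 \<le> t \<Longrightarrow>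
                    ((\<lambda>s. U s k) has_real_derivative U' t k) (at t within {0..})"
    and U'_cont: "\<And>k. k \<le> p \<Longrightarrow> continuous_on {0..} (\<lambda>t. U' t k)"
    and scheme: "\<And>t. 0 \<le> t \<Longrightarrow>
       \<forall>k\<le>p. mat_vec p (Pmat w) (U' t) k + a * mat_vec p (Qx p x) (U t) k
         = mat_vec p (Qxx p x w (\<lambda>j. eps j t)) (U t) k
           + \<sigma>0 * unit_vec 0 k * (a * U t 0 - eps 0 t * mat_vec p (Dx p x w) (U t) 0 - g0)
           + \<sigma>p * unit_vec p k * (- eps p t * mat_vec p (Dx p x w) (U t) p - gp)"
    and sigma0: "\<sigma>0 = -1" and sigmap: "\<sigma>p = 1"
    and g0: "g0 = 0" and gp: "gp = 0"
    and t: "0 \<le> t"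
  shows "dot p (U t) (mat_vec p (Pmat w) (U t))
         + 2 * integral {0..t} (\<lambda>s.
             dot p (mat_vec p (mat_mul p (mat_diag (\<lambda>k. sqrt (eps k s))) (Dx p x w)) (U s))
                   (mat_vec p (Pmat w)
                      (mat_vec p (mat_mul p (mat_diag (\<lambda>k. sqrt (eps k s))) (Dx p x w)) (U s))))
         \<le> dot p (U 0) (mat_vec p (Pmat w) (U 0))"
proof -
  have x: "strict_mono_on {..p} x"
    using GL unfolding gauss_lobatto_def by (auto intro: strict_mono_onI)
  have deriv: "((\<lambda>s. U s k) has_real_derivative U' s k) (at s within {0..t})"
    if "k \<le> p" "s \<in> {0..t}" for k s
    using U_deriv[of k s] that by (auto intro: DERIV_subset)
  have U_cont: "continuous_on {0..t} (\<lambda>s. U s k)" if "k \<le> p" for k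
    unfolding continuous_on_eq_continuous_within using deriv[OF that] DERIV_continuous by blast
  have rate: "2 * dot p (U s) (mat_vec p (Pmat w) (U' s)) \<le> - 2 * dissipation p x w (\<lambda>k. eps k s) (U s)"
    if "s \<in> {0..t}" for s
  proof -
    have "2 * dot p (U s) (mat_vec p (Pmat w) (U' s)) = - 2 * dissipation p x w (\<lambda>k. eps k s) (U s)
        - a * (U s 0 * U s 0 + U s p * U s p)"
      using scheme[of s] that
      by (intro energy_rate[OF x p]) (simp add: sigma0 sigmap g0 gp algebra_simps)
    moreover have "0 \<le> a * (U s 0 * U s 0 + U s p * U s p)"
      using a by simp
    ultimately show ?thesis by linarith
  qed
  have "continuous_on {0..t} (eps k)" if "k \<le> p" for k
    using eps_cont[OF that] by (rule continuous_on_subset) auto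
  then have "continuous_on {0..t} (\<lambda>s. dissipation p x w (\<lambda>k. eps k s) (U s))"
    using U_cont by (intro continuous_on_dissipation)
  then show ?thesis
    unfolding dissipation_def[symmetric]
    by (intro integral_bound_from_derivative_le[OF t _ rate] has_real_derivative_P_energy deriv
        integrable_continuous_interval)
qed

end
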